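(* Let $\sigma:\mathbb{R}\to\mathbb{R}$ be continuous and let $F:\mathbb{R}^d\to\mathbb{R}^d$ be given by $F=A_L\circ\dots\circ A_1$ with $A_j(x)=\sigma(W_jx+b_j)$, $W_j\in\mathbb{R}^{d\times d}$, $b_j\in\mathbb{R}^d$, $j=1,\dots,L$. Then for every compact $K\subset\mathbb{R}^d$ and every $\varepsilon>0$ there exist invertible $\tilde W_j\in\mathbb{R}^{d\times d}$, $j=1,\dots,L$, such that the function $\tilde F=\tilde A_L\circ\dots\circ\tilde A_1$ with $\tilde A_j(x)=\sigma(\tilde W_jx+b_j)$ satisfies $\|\tilde F-F\|_K<\varepsilon$.
   Context: $\sigma$ is applied componentwise to vectors. For $f:K\to\mathbb{R}^m$, $\|f\|_K=\sup\{\|f(x)\|:x\in K\}$ with $\|\cdot\|$ the Euclidean norm. *)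

theory Defs
  imports "HOL-Analysis.Analysis"
begin

definition act :: "(real \<Rightarrow> real) \<Rightarrow> real^'n \<Rightarrow> real^'n" where
  "act \<sigma> v = (\<chi> i. \<sigma> (v $ i))"

text \<open>The network A_k o ... o A_1 with A_j(x) = sigma(W_j x + b_j), layers indexed 1..k.\<close>
fun net :: "(real \<Rightarrow> real) \<Rightarrow> (nat \<Rightarrow> real^'n^'n) \<Rightarrow> (nat \<Rightarrow> real^'n) \<Rightarrow> nat \<Rightarrow> real^'n \<Rightarrow> real^'n" where
  "net \<sigma> W b 0 x = x"
| "net \<sigma> W b (Suc k) x = act \<sigma> (W (Suc k) *v net \<sigma> W b k x + b (Suc k))"

end

theory Submission
  imports Defs "HOL-Computational_Algebra.Polynomial"
begin

text \<open>Perturbing the last weight matrix to W + t I, with t small and outside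
  the finitely many roots of the polynomial det (W + t I), makes it invertible. Since the
  map (t, y) \<mapsto> \<sigma>((W + t I) y + b) is continuous, it is uniformly continuous near the compact
  set {0} \<times> F(K) of outputs of the first layers; so the small perturbation of the last layer,
  together with a sufficiently accurate perturbation of the earlier layers (induction
  hypothesis), moves the output by less than \<epsilon> on K.\<close>

lemma matrix_vector_mult_scaleR_mat_1: "((c *\<^sub>R mat 1) :: real^'n^'n) *v x = c *\<^sub>R x"
  by (metis scaleR_matrix_vector_assoc matrix_vector_mul_lid)

lemma poly_det_add_scaleR_mat_1:
  fixes A :: "real^'n^'n"
  obtains q where "\<And>t. poly q t = det (A + t *\<^sub>R mat 1)"
proof
  let ?q = "\<Sum>p\<in>{p. p permutes (UNIV::'n set)}.
    smult (of_int (sign p)) (\<Prod>i\<in>UNIV. [:A$i$p i, if i = p i then 1 else 0:])"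
  show "poly ?q t = det (A + t *\<^sub>R mat 1)" for t
    unfolding det_def poly_sum poly_prod by (intro sum.cong refl) (simp add: poly_prod mat_def)
qed

lemma invertible_add_scaleR_mat_1_large:
  fixes A :: "real^'n^'n"
  obtains t where "invertible (A + t *\<^sub>R mat 1)"
proof -
  obtain B where B: "B > 0" "\<And>x. norm (A *v x) \<le> norm x * B"
    using bounded_linear.pos_bounded[OF matrix_vector_mul_bounded_linear] by blast
  have "x = 0" if "(A + (B + 1) *\<^sub>R mat 1) *v x = 0" for x
  proof -
    from that have "A *v x = - ((B + 1) *\<^sub>R x)"
      by (simp add: matrix_vector_mult_add_rdistrib matrix_vector_mult_scaleR_mat_1
          eq_neg_iff_add_eq_0)
    then have "(B + 1) * norm x \<le> norm x * B"
      using B(2)[of x] B(1) by simp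
    then show "x = 0"
      by (simp add: algebra_simps)
  qed
  then have "inj ((*v) (A + (B + 1) *\<^sub>R mat 1))"
    using linear_injective_0[OF matrix_vector_mul_linear] by blast
  then show thesis
    using that invertible_left_inverse matrix_left_invertible_injective by blast
qed

lemma invertible_add_scaleR_mat_1_small:
  fixes A :: "real^'n^'n"
  assumes "e > 0"
  obtains t where "\<bar>t\<bar> < e" "invertible (A + t *\<^sub>R mat 1)"
proof -
  obtain q where q: "\<And>t. poly q t = det (A + t *\<^sub>R mat 1)"
    using poly_det_add_scaleR_mat_1 by blast
  obtain t0 where "invertible (A + t0 *\<^sub>R mat 1)"
    using invertible_add_scaleR_mat_1_large by blast
  then have "q \<noteq> 0"
    using q[of t0] invertible_det_nz by (metis poly_0)
  then have "finite {t. poly q t = 0}"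
    by (rule poly_roots_finite)
  moreover have "infinite {-e<..<e}"
    using assms by simp
  ultimately have "\<not> {-e<..<e} \<subseteq> {t. poly q t = 0}"
    using finite_subset by blast
  then obtain t where "t \<in> {-e<..<e}" "poly q t \<noteq> 0"
    by blast
  then show thesis
    using that[of t] q[of t] invertible_det_nz by force
qed

lemma continuous_on_act:
  assumes "continuous_on UNIV \<sigma>"
  shows "continuous_on UNIV (act \<sigma> :: real^'n \<Rightarrow> real^'n)"
  unfolding act_def
  by (intro continuous_on_vec_lambda continuous_on_compose2[OF assms]
      continuous_on_component continuous_on_id) auto

lemma continuous_on_net:
  assumes "continuous_on UNIV \<sigma>"
  shows "continuous_on UNIV (net \<sigma> W b k :: real^'n \<Rightarrow> real^'n)"
proof (induction k)
  case 0
  then show ?case by (simp add: continuous_on_id)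
next
  case (Suc k)
  have "continuous_on UNIV (\<lambda>x. W (Suc k) *v net \<sigma> W b k x + b (Suc k))"
    by (intro continuous_intros linear_continuous_on_compose[OF Suc]
        matrix_vector_mul_linear)
  then show ?case
    by (simp add: continuous_on_compose2[OF continuous_on_act[OF assms]])
qed

lemma net_cong:
  "(\<And>j. 1 \<le> j \<Longrightarrow> j \<le> k \<Longrightarrow> W' j = W j) \<Longrightarrow> net \<sigma> W' b k x = net \<sigma> W b k x"
  by (induction k) auto

lemma uniformly_continuous_near_compact:
  fixes f :: "'a::heine_borel \<Rightarrow> 'b::metric_space"
  assumes f: "continuous_on UNIV f" and C: "compact C" and "\<epsilon> > 0"
  obtains \<delta> where "\<delta> > 0" "\<And>x x'. x \<in> C \<Longrightarrow> dist x' x < \<delta> \<Longrightarrow> dist (f x') (f x) < \<epsilon>"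
proof -
  obtain a r where r: "C \<subseteq> cball a r"
    using compact_imp_bounded[OF C] bounded_subset_cball by blast
  have "uniformly_continuous_on (cball a (r + 1)) f"
    by (rule compact_uniformly_continuous[OF continuous_on_subset[OF f]]) auto
  then obtain d where d: "d > 0"
    "\<And>x x'. x \<in> cball a (r + 1) \<Longrightarrow> x' \<in> cball a (r + 1) \<Longrightarrow> dist x' x < d
      \<Longrightarrow> dist (f x') (f x) < \<epsilon>"
    using \<open>\<epsilon> > 0\<close> unfolding uniformly_continuous_on_def by metis
  have "dist (f x') (f x) < \<epsilon>" if "x \<in> C" "dist x' x < min 1 d" for x x'
  proof (rule d(2))
    show "x \<in> cball a (r + 1)"
      using r that(1) by auto
    show "x' \<in> cball a (r + 1)"
      using r that dist_triangle[of a x' x] by (auto simp: dist_commute)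
  qed (use that in auto)
  then show thesis
    using that[of "min 1 d"] d(1) by simp
qed

lemma invertible_layer_near:
  fixes A :: "real^'n^'n"
  assumes "continuous_on UNIV \<sigma>" and "compact C" and "\<epsilon> > 0"
  obtains \<delta> t where "\<delta> > 0" "invertible (A + t *\<^sub>R mat 1)"
    "\<And>y y'. y \<in> C \<Longrightarrow> dist y' y < \<delta> \<Longrightarrow>
      dist (act \<sigma> ((A + t *\<^sub>R mat 1) *v y' + c)) (act \<sigma> (A *v y + c)) < \<epsilon>"
proof -
  define F where "F p = act \<sigma> (A *v snd p + fst p *\<^sub>R snd p + c)" for p :: "real \<times> (real^'n)"
  have F: "continuous_on UNIV F"
    unfolding F_def
    by (intro continuous_on_compose2[OF continuous_on_act[OF assms(1)]] continuous_intros
        linear_continuous_on_compose[OF continuous_on_snd] matrix_vector_mul_linear) auto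
  have C0: "compact ({0} \<times> C)"
    using assms(2) by (simp add: compact_Times)
  obtain \<delta> where \<delta>: "\<delta> > 0"
    "\<And>p p'. p \<in> {0} \<times> C \<Longrightarrow> dist p' p < \<delta> \<Longrightarrow> dist (F p') (F p) < \<epsilon>"
    using uniformly_continuous_near_compact[OF F C0 assms(3)] by blast
  obtain t where t: "\<bar>t\<bar> < \<delta>/2" "invertible (A + t *\<^sub>R mat 1)"
    using invertible_add_scaleR_mat_1_small[of "\<delta>/2"] \<delta>(1) by auto
  have close: "dist (act \<sigma> ((A + t *\<^sub>R mat 1) *v y' + c)) (act \<sigma> (A *v y + c)) < \<epsilon>"
    if "y \<in> C" "dist y' y < \<delta>/2" for y y'
  proof -
    have "dist (t, y') (0, y) \<le> \<bar>t\<bar> + dist y' y"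
      using sqrt_sum_squares_le_sum_abs[of t "dist y' y"] by (simp add: dist_Pair_Pair)
    then have "dist (t, y') (0, y) < \<delta>"
      using t(1) that(2) by linarith
    then have "dist (F (t, y')) (F (0, y)) < \<epsilon>"
      using that(1) by (intro \<delta>(2)) auto
    then show ?thesis
      by (simp add: F_def matrix_vector_mult_add_rdistrib matrix_vector_mult_scaleR_mat_1)
  qed
  show thesis
    using that[of "\<delta>/2" t] \<delta>(1) t(2) close by simp
qed

lemma net_approx_invertible:
  fixes W :: "nat \<Rightarrow> real^'n^'n"
  assumes \<sigma>: "continuous_on UNIV \<sigma>" and K: "compact K" and "\<epsilon> > 0"
  obtains W' where "\<forall>j\<in>{1..L}. invertible (W' j)"
    "\<And>x. x \<in> K \<Longrightarrow> dist (net \<sigma> W' b L x) (net \<sigma> W b L x) < \<epsilon>"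
  using \<open>\<epsilon> > 0\<close>
proof (induction L arbitrary: \<epsilon> thesis)
  case 0
  then show ?case
    by (intro "0.prems"(1)[of W]) auto
next
  case (Suc L)
  have C: "compact (net \<sigma> W b L ` K)"
    using compact_continuous_image[OF continuous_on_subset[OF continuous_on_net[OF \<sigma>]] K] by simp
  obtain \<delta> t where \<delta>: "\<delta> > 0" "invertible (W (Suc L) + t *\<^sub>R mat 1)"
    "\<And>y y'. y \<in> net \<sigma> W b L ` K \<Longrightarrow> dist y' y < \<delta> \<Longrightarrow>
      dist (act \<sigma> ((W (Suc L) + t *\<^sub>R mat 1) *v y' + b (Suc L)))
        (act \<sigma> (W (Suc L) *v y + b (Suc L))) < \<epsilon>"
    using invertible_layer_near[OF \<sigma> C Suc.prems(2), of "W (Suc L)" "b (Suc L)"] by blast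
  obtain W0 where W0: "\<forall>j\<in>{1..L}. invertible (W0 j)"
    "\<And>x. x \<in> K \<Longrightarrow> dist (net \<sigma> W0 b L x) (net \<sigma> W b L x) < \<delta>"
    using Suc.IH[OF _ \<delta>(1)] by blast
  define W' where "W' = W0(Suc L := W (Suc L) + t *\<^sub>R mat 1)"
  have "net \<sigma> W' b L x = net \<sigma> W0 b L x" for x
    by (rule net_cong) (simp add: W'_def)
  then have "dist (net \<sigma> W' b (Suc L) x) (net \<sigma> W b (Suc L) x) < \<epsilon>" if "x \<in> K" for x
    using \<delta>(3)[OF imageI[OF that] W0(2)[OF that]] by (simp add: W'_def)
  moreover have "\<forall>j\<in>{1..Suc L}. invertible (W' j)"
    using W0(1) \<delta>(2) by (auto simp: W'_def)
  ultimately show ?case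
    using Suc.prems(1) by blast
qed

theorem lemma7:
  fixes \<sigma> :: "real \<Rightarrow> real"
    and W :: "nat \<Rightarrow> real^'n^'n" and b :: "nat \<Rightarrow> real^'n"
    and L :: nat and K :: "(real^'n) set" and \<epsilon> :: real
  assumes "continuous_on UNIV \<sigma>"
    and "compact K"
    and "\<epsilon> > 0"
  shows "\<exists>W'. (\<forall>j\<in>{1..L}. invertible (W' j)) \<and>
          (\<exists>e<\<epsilon>. \<forall>x\<in>K. norm (net \<sigma> W' b L x - net \<sigma> W b L x) \<le> e)"
proof -
  obtain W' where "\<forall>j\<in>{1..L}. invertible (W' j)"
      "\<And>x. x \<in> K \<Longrightarrow> dist (net \<sigma> W' b L x) (net \<sigma> W b L x) < \<epsilon>/2"
    using net_approx_invertible[OF assms(1,2), where \<epsilon> = "\<epsilon>/2" and W = W and b = b and L = L]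
      assms(3) by auto
  then show ?thesis
    using assms(3) by (intro exI[of _ W'] conjI exI[of _ "\<epsilon>/2"]) (auto simp: dist_norm less_imp_le)
qed

end
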